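(* Let $d\ge1$ and let $M\subseteq\mathbb{R}^d$ be a multirectangle. Every element of order $2$ in $\operatorname{Rec}_d(M)$ is a product of rectangle transpositions with pairwise disjoint supports.
   Context: A rectangle in $\mathbb{R}^d$ is a set $\prod_{i=1}^d[a_i,b_i)$ with $a_i<b_i$ real numbers. A multirectangle is a finite union of rectangles. For a multirectangle $M\subseteq\mathbb{R}^d$, $\operatorname{Rec}_d(M)$ denotes the group, under composition, of all bijections $f:M\to M$ for which there exists a finite partition of $M$ into rectangles such that the restriction of $f$ to each piece is a translation. A rectangle transposition is, for two disjoint rectangles $P,Q\subseteq M$ with $Q=P+v$, the element $\tau_{P,Q}$ that is translation by $v$ on $P$, by $-v$ on $Q$, and the identity elsewhere; its support is $P\cup Q$. *)

theory Defs
  imports "HOL-Analysis.Analysis"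
begin

text \<open>Points of R^d are modelled as \<open>real ^ 'd\<close> for a finite index type \<open>'d\<close>
  (so d = CARD('d) \<ge> 1 automatically).\<close>

definition is_rectangle :: "(real ^ 'd) set \<Rightarrow> bool" where
  "is_rectangle R \<longleftrightarrow> (\<exists>a b. (\<forall>i. a $ i < b $ i) \<and>
      R = {x. \<forall>i. a $ i \<le> x $ i \<and> x $ i < b $ i})"

definition is_multirectangle :: "(real ^ 'd) set \<Rightarrow> bool" where
  "is_multirectangle M \<longleftrightarrow> (\<exists>\<R>. finite \<R> \<and> (\<forall>R\<in>\<R>. is_rectangle R) \<and> M = \<Union>\<R>)"

text \<open>Elements of Rec_d(M), represented as maps on the whole space that are the
  identity outside M (so group composition is function composition).\<close>
definition in_Rec :: "(real ^ 'd) set \<Rightarrow> (real ^ 'd \<Rightarrow> real ^ 'd) \<Rightarrow> bool" where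
  "in_Rec M f \<longleftrightarrow> bij_betw f M M \<and> (\<forall>x. x \<notin> M \<longrightarrow> f x = x) \<and>
     (\<exists>\<P>. finite \<P> \<and> (\<forall>R\<in>\<P>. is_rectangle R) \<and> pairwise disjnt \<P> \<and> \<Union>\<P> = M \<and>
          (\<forall>R\<in>\<P>. \<exists>v. \<forall>x\<in>R. f x = x + v))"

definition rect_transp :: "(real ^ 'd) set \<Rightarrow> (real ^ 'd) set \<Rightarrow> real ^ 'd \<Rightarrow> real ^ 'd \<Rightarrow> real ^ 'd" where
  "rect_transp P Q v x = (if x \<in> P then x + v else if x \<in> Q then x - v else x)"

definition is_rect_transp_data :: "(real ^ 'd) set \<Rightarrow> (real ^ 'd) set \<times> (real ^ 'd) set \<times> (real ^ 'd) \<Rightarrow> bool" where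
  "is_rect_transp_data M t \<longleftrightarrow>
      is_rectangle (fst t) \<and> is_rectangle (fst (snd t)) \<and> fst t \<subseteq> M \<and> fst (snd t) \<subseteq> M \<and>
      disjnt (fst t) (fst (snd t)) \<and> fst (snd t) = (\<lambda>x. x + snd (snd t)) ` fst t"

definition transp_of :: "(real ^ 'd) set \<times> (real ^ 'd) set \<times> (real ^ 'd) \<Rightarrow> real ^ 'd \<Rightarrow> real ^ 'd" where
  "transp_of t = rect_transp (fst t) (fst (snd t)) (snd (snd t))"

definition transp_support :: "(real ^ 'd) set \<times> (real ^ 'd) set \<times> (real ^ 'd) \<Rightarrow> (real ^ 'd) set" where
  "transp_support t = fst t \<union> fst (snd t)"

end

theory Submission
  imports Defs
begin

text \<open>Refine the partition of \<open>M\<close> on whose pieces \<open>f\<close> is a translation into the pieces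
  \<open>R \<inter> f -` S\<close>: these are again rectangles (a rectangle meets a translated rectangle in a
  rectangle), \<open>f\<close> translates each of them, and since \<open>f\<close> is an involution it permutes them
  involutively. A piece fixed by \<open>f\<close> is fixed pointwise, because a translation by \<open>v\<close> squaring
  to the identity has \<open>2v = 0\<close>; a piece \<open>A\<close> with \<open>f ` A \<noteq> A\<close> forms with \<open>f ` A\<close> a rectangle
  transposition. These transpositions have disjoint supports and their product is \<open>f\<close>.\<close>

lemma is_rectangle_Int:
  assumes "is_rectangle R" "is_rectangle S" "R \<inter> S \<noteq> {}"
  shows "is_rectangle (R \<inter> S)"
proof -
  obtain a b where ab: "R = {x. \<forall>i. a $ i \<le> x $ i \<and> x $ i < b $ i}"
    using assms(1) unfolding is_rectangle_def by blast
  obtain c d where cd: "S = {x. \<forall>i. c $ i \<le> x $ i \<and> x $ i < d $ i}"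
    using assms(2) unfolding is_rectangle_def by blast
  obtain y where "y \<in> R" "y \<in> S" using assms(3) by blast
  define p where "p = (\<chi> i. max (a $ i) (c $ i))"
  define q where "q = (\<chi> i. min (b $ i) (d $ i))"
  have "\<forall>i. p $ i < q $ i"
  proof
    fix i
    have "a $ i \<le> y $ i" "y $ i < b $ i" "c $ i \<le> y $ i" "y $ i < d $ i"
      using \<open>y \<in> R\<close> \<open>y \<in> S\<close> unfolding ab cd by auto
    then show "p $ i < q $ i" unfolding p_def q_def by simp
  qed
  moreover have "R \<inter> S = {x. \<forall>i. p $ i \<le> x $ i \<and> x $ i < q $ i}"
    unfolding p_def q_def ab cd by auto
  ultimately show ?thesis unfolding is_rectangle_def by blast
qed

lemma is_rectangle_translation_vimage:
  assumes "is_rectangle S"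
  shows "is_rectangle {x. x + v \<in> S}"
proof -
  obtain c d where cd: "\<forall>i. c $ i < d $ i" "S = {x. \<forall>i. c $ i \<le> x $ i \<and> x $ i < d $ i}"
    using assms unfolding is_rectangle_def by blast
  have "{x. x + v \<in> S} = {x. \<forall>i. (c - v) $ i \<le> x $ i \<and> x $ i < (d - v) $ i}"
    unfolding cd(2) by (simp add: algebra_simps)
  moreover have "\<forall>i. (c - v) $ i < (d - v) $ i" using cd(1) by simp
  ultimately show ?thesis unfolding is_rectangle_def by blast
qed

lemma pairwise_disjnt_Int_Union_Diff:
  assumes "pairwise disjnt \<Q>" "B \<in> \<Q>" "B \<in> C"
  shows "B \<inter> \<Union>(\<Q> - C) = {}"
proof -
  have "B \<inter> R = {}" if "R \<in> \<Q> - C" for R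
    using assms that unfolding pairwise_def disjnt_def by (metis DiffE)
  then show ?thesis by blast
qed

lemma sorted_wrt_sym_imp_nth:
  assumes "\<And>x y. P x y \<Longrightarrow> P y x" "sorted_wrt P xs"
  shows "\<forall>i<length xs. \<forall>j<length xs. i \<noteq> j \<longrightarrow> P (xs ! i) (xs ! j)"
  using assms by (metis linorder_neqE_nat sorted_wrt_iff_nth_less)

lemma involution_translation_fixes:
  fixes f :: "'a::real_vector \<Rightarrow> 'a"
  assumes "\<And>x. f (f x) = x" "\<forall>x\<in>A. f x = x + v" "f ` A = A" "x \<in> A"
  shows "f x = x"
proof -
  have "f x \<in> A" using assms(3,4) by blast
  then have "x = x + v + v" using assms(1)[of x] assms(2,4) by metis
  then have "v + v = 0" by (simp add: add.assoc)
  then have "v = 0" by (metis scaleR_2 scaleR_eq_0_iff zero_neq_numeral)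
  then show "f x = x" using assms(2,4) by simp
qed

lemma rect_transp_extend:
  assumes "A \<inter> B = {}" "A \<inter> C = {}" "B \<inter> C = {}"
    and "\<forall>x\<in>A. f x = x + v" "\<And>x. x \<in> B \<Longrightarrow> f x = x - v" "f ` C \<subseteq> C"
  shows "rect_transp A B v (if x \<in> C then f x else x) = (if x \<in> A \<union> B \<union> C then f x else x)"
proof -
  consider "x \<in> A" | "x \<in> B" | "x \<in> C" | "x \<notin> A \<union> B \<union> C" by blast
  then show ?thesis
  proof cases
    case 1
    then show ?thesis using assms(2,4) by (auto simp: rect_transp_def)
  next
    case 2
    then show ?thesis using assms(1,3,5) by (auto simp: rect_transp_def)
  next
    case 3
    then have "f x \<notin> A" "f x \<notin> B" using assms(2,3,6) by blast+
    then show ?thesis using 3 by (simp add: rect_transp_def)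
  qed (simp add: rect_transp_def)
qed

definition translation_pieces ::
    "(real ^ 'd) set \<Rightarrow> (real ^ 'd \<Rightarrow> real ^ 'd) \<Rightarrow> (real ^ 'd) set set \<Rightarrow> bool" where
  "translation_pieces M f \<Q> \<longleftrightarrow> finite \<Q> \<and> pairwise disjnt \<Q> \<and>
     (\<forall>R\<in>\<Q>. is_rectangle R \<and> R \<subseteq> M \<and> (\<exists>v. \<forall>x\<in>R. f x = x + v) \<and> f ` R \<in> \<Q>)"

lemma translation_piecesD:
  assumes "translation_pieces M f \<Q>" "R \<in> \<Q>"
  shows "is_rectangle R" "R \<subseteq> M" "\<exists>v. \<forall>x\<in>R. f x = x + v" "f ` R \<in> \<Q>"
  using assms unfolding translation_pieces_def by blast+

lemma translation_pieces_disjnt: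
  assumes "translation_pieces M f \<Q>" "R \<in> \<Q>" "S \<in> \<Q>" "R \<noteq> S"
  shows "disjnt R S"
  using assms unfolding translation_pieces_def by (metis pairwiseD)

lemma translation_pieces_remove_orbit:
  assumes "\<And>x. f (f x) = x" "translation_pieces M f \<Q>"
  shows "translation_pieces M f (\<Q> - {A, f ` A})"
proof -
  have ff: "f ` f ` B = B" for B using assms(1) by (simp add: image_image)
  have "f ` R \<in> \<Q> - {A, f ` A}" if "R \<in> \<Q> - {A, f ` A}" for R
  proof -
    have "R \<noteq> A" "R \<noteq> f ` A" using that by simp_all
    then have "f ` R \<noteq> A" "f ` R \<noteq> f ` A" by (metis ff)+
    then show ?thesis using that assms(2) unfolding translation_pieces_def by blast
  qed
  moreover have "pairwise disjnt (\<Q> - {A, f ` A})"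
    using assms(2) unfolding translation_pieces_def by (meson Diff_subset pairwise_subset)
  moreover have "finite (\<Q> - {A, f ` A})"
    using assms(2) unfolding translation_pieces_def by simp
  ultimately show ?thesis
    using assms(2) unfolding translation_pieces_def by (metis DiffD1)
qed

lemma rect_transp_data_of_swapped_piece:
  assumes "translation_pieces M f \<Q>" "A \<in> \<Q>" "f ` A \<noteq> A" "\<forall>x\<in>A. f x = x + v"
  shows "is_rect_transp_data M (A, f ` A, v)"
proof -
  have fA: "f ` A \<in> \<Q>" by (rule translation_piecesD(4)[OF assms(1,2)])
  have "f ` A = (\<lambda>x. x + v) ` A" using assms(4) by auto
  then show ?thesis
    using translation_pieces_disjnt[OF assms(1,2) fA assms(3)[symmetric]]
      translation_piecesD(1,2)[OF assms(1) assms(2)] translation_piecesD(1,2)[OF assms(1) fA]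
    unfolding is_rect_transp_data_def by simp
qed

definition transp_decomposition ::
    "(real ^ 'd) set \<Rightarrow> (real ^ 'd \<Rightarrow> real ^ 'd) \<Rightarrow> (real ^ 'd) set \<Rightarrow>
     ((real ^ 'd) set \<times> (real ^ 'd) set \<times> (real ^ 'd)) list \<Rightarrow> bool" where
  "transp_decomposition M f U ts \<longleftrightarrow>
     (\<forall>t\<in>set ts. is_rect_transp_data M t \<and> transp_support t \<subseteq> U) \<and>
     sorted_wrt (\<lambda>s t. disjnt (transp_support s) (transp_support t)) ts \<and>
     (\<forall>x. foldr (\<circ>) (map transp_of ts) id x = (if x \<in> U then f x else x))"

lemma transp_decomposition_Un_fixed:
  assumes "transp_decomposition M f U ts" "A \<inter> U = {}" "\<And>x. x \<in> A \<Longrightarrow> f x = x"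
  shows "transp_decomposition M f (A \<union> U) ts"
  using assms unfolding transp_decomposition_def by auto

lemma transp_decomposition_Cons:
  assumes "transp_decomposition M f U ts" "is_rect_transp_data M (A, B, v)"
    and "A \<inter> U = {}" "B \<inter> U = {}" "f ` U \<subseteq> U"
    and "\<forall>x\<in>A. f x = x + v" "\<And>x. x \<in> B \<Longrightarrow> f x = x - v"
  shows "transp_decomposition M f (A \<union> B \<union> U) ((A, B, v) # ts)"
proof -
  have "A \<inter> B = {}"
    using assms(2) unfolding is_rect_transp_data_def disjnt_def by (metis fst_conv snd_conv)
  then have "foldr (\<circ>) (map transp_of ((A, B, v) # ts)) id x = (if x \<in> A \<union> B \<union> U then f x else x)"
    for x
    using rect_transp_extend[OF _ assms(3,4,6,7,5)] assms(1)
    unfolding transp_decomposition_def by (simp add: transp_of_def)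
  moreover have "transp_support (A, B, v) \<inter> U = {}"
    using assms(3,4) by (auto simp: transp_support_def)
  then have "sorted_wrt (\<lambda>s t. disjnt (transp_support s) (transp_support t)) ((A, B, v) # ts)"
    using assms(1) unfolding transp_decomposition_def disjnt_def by fastforce
  ultimately show ?thesis
    using assms(1,2) unfolding transp_decomposition_def by (auto simp: transp_support_def)
qed

lemma translation_pieces_decompose:
  assumes "\<And>x. f (f x) = x" "translation_pieces M f \<Q>"
  shows "\<exists>ts. transp_decomposition M f (\<Union>\<Q>) ts"
  using assms(2)
proof (induction "card \<Q>" arbitrary: \<Q> rule: less_induct)
  case less
  show ?case
  proof (cases "\<Q> = {}")
    case True
    then show ?thesis by (intro exI[of _ "[]"]) (simp add: transp_decomposition_def)
  next
    case False
    then obtain A where A: "A \<in> \<Q>" by blast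
    obtain v where v: "\<forall>x\<in>A. f x = x + v"
      using translation_piecesD(3)[OF less.prems A] by blast
    obtain B where B: "f ` A = B" by blast
    have B_in: "B \<in> \<Q>" using translation_piecesD(4)[OF less.prems A] B by simp
    define \<Q>' where "\<Q>' = \<Q> - {A, B}"
    have pieces': "translation_pieces M f \<Q>'"
      unfolding \<Q>'_def B[symmetric] using translation_pieces_remove_orbit[OF assms(1) less.prems] .
    have "card \<Q>' < card \<Q>"
      unfolding \<Q>'_def using A less.prems by (intro psubset_card_mono) (auto simp: translation_pieces_def)
    then obtain ts where ts: "transp_decomposition M f (\<Union>\<Q>') ts"
      using less.hyps pieces' by blast
    have "pairwise disjnt \<Q>" using less.prems unfolding translation_pieces_def by blast
    then have disj: "A \<inter> \<Union>\<Q>' = {}" "B \<inter> \<Union>\<Q>' = {}"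
      unfolding \<Q>'_def using A B_in by (simp_all add: pairwise_disjnt_Int_Union_Diff)
    have Union_split: "\<Union>\<Q> = A \<union> B \<union> \<Union>\<Q>'" unfolding \<Q>'_def using A B_in by blast
    have f_rest: "f ` \<Union>\<Q>' \<subseteq> \<Union>\<Q>'"
      using translation_piecesD(4)[OF pieces'] by blast
    show ?thesis
    proof (cases "B = A")
      case True
      have "f x = x" if "x \<in> A" for x
        using involution_translation_fixes[OF assms(1) v _ that] B True by simp
      then show ?thesis
        using transp_decomposition_Un_fixed[OF ts disj(1)] Union_split True by auto
    next
      case False
      have "is_rect_transp_data M (A, B, v)"
        using rect_transp_data_of_swapped_piece[OF less.prems A _ v] B False by simp
      moreover have "f x = x - v" if "x \<in> B" for x
        using that B v assms(1) by (metis add_diff_cancel imageE)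
      ultimately show ?thesis
        using transp_decomposition_Cons[OF ts _ disj f_rest v] Union_split by auto
    qed
  qed
qed

lemma in_Rec_involution_translation_pieces:
  assumes "in_Rec M f" "\<And>x. f (f x) = x"
  shows "\<exists>\<Q>. translation_pieces M f \<Q> \<and> \<Union>\<Q> = M"
proof -
  obtain \<P> where \<P>: "finite \<P>" "\<forall>R\<in>\<P>. is_rectangle R" "pairwise disjnt \<P>" "\<Union>\<P> = M"
      "\<forall>R\<in>\<P>. \<exists>v. \<forall>x\<in>R. f x = x + v"
    using assms(1) unfolding in_Rec_def by blast
  have fM: "f x \<in> M" if "x \<in> M" for x
    using assms(1) that unfolding in_Rec_def by (meson bij_betwE)
  define \<Q> where "\<Q> = (\<lambda>(R, S). R \<inter> f -` S) ` (\<P> \<times> \<P>) - {{}}"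
  have mem_\<Q>: "A \<in> \<Q> \<longleftrightarrow> (\<exists>R\<in>\<P>. \<exists>S\<in>\<P>. A = R \<inter> f -` S \<and> A \<noteq> {})" for A
    unfolding \<Q>_def by auto
  have "pairwise disjnt \<Q>"
  proof (rule pairwiseI)
    fix A A' assume "A \<in> \<Q>" "A' \<in> \<Q>" "A \<noteq> A'"
    then obtain R S R' S' where "R \<in> \<P>" "S \<in> \<P>" "R' \<in> \<P>" "S' \<in> \<P>"
      and "A = R \<inter> f -` S" "A' = R' \<inter> f -` S'"
      using mem_\<Q> by meson
    then show "disjnt A A'"
      using \<P>(3) \<open>A \<noteq> A'\<close> unfolding pairwise_def disjnt_def by blast
  qed
  moreover have "is_rectangle A \<and> A \<subseteq> M \<and> (\<exists>v. \<forall>x\<in>A. f x = x + v) \<and> f ` A \<in> \<Q>"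
    if A: "A \<in> \<Q>" for A
  proof -
    obtain R S where RS: "R \<in> \<P>" "S \<in> \<P>" "A = R \<inter> f -` S" "A \<noteq> {}"
      using A[unfolded mem_\<Q>] by blast
    obtain v where v: "\<forall>x\<in>R. f x = x + v" using \<P>(5) RS(1) by blast
    have "A = R \<inter> {x. x + v \<in> S}" using RS(3) v by auto
    then have "is_rectangle A"
      using is_rectangle_Int is_rectangle_translation_vimage \<P>(2) RS by metis
    moreover have "f ` A = S \<inter> f -` R"
      using RS(3) assms(2) by (auto intro: image_eqI[where x = "f _"])
    then have "f ` A \<in> \<Q>" unfolding mem_\<Q> using RS by auto
    ultimately show ?thesis using \<P>(4) RS v by blast
  qed
  moreover have "\<Union>\<Q> = M"
    using \<P>(4) fM unfolding \<Q>_def by blast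
  moreover have "finite \<Q>" unfolding \<Q>_def using \<P>(1) by simp
  ultimately show ?thesis unfolding translation_pieces_def by blast
qed

theorem mainTheorem5:
  fixes M :: "(real ^ 'd) set" and f :: "real ^ 'd \<Rightarrow> real ^ 'd"
  assumes "is_multirectangle M"
    and "in_Rec M f"
    and "f \<circ> f = id" and "f \<noteq> id"
  shows "\<exists>ts. (\<forall>t\<in>set ts. is_rect_transp_data M t) \<and>
           (\<forall>i<length ts. \<forall>j<length ts. i \<noteq> j \<longrightarrow>
               disjnt (transp_support (ts ! i)) (transp_support (ts ! j))) \<and>
           f = foldr (\<circ>) (map transp_of ts) id"
proof -
  have involution: "\<And>x. f (f x) = x" using assms(3) by (metis comp_apply id_apply)
  obtain \<Q> where "translation_pieces M f \<Q>" "\<Union>\<Q> = M"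
    using in_Rec_involution_translation_pieces[OF assms(2) involution] by blast
  then obtain ts where data: "\<forall>t\<in>set ts. is_rect_transp_data M t"
    and "sorted_wrt (\<lambda>s t. disjnt (transp_support s) (transp_support t)) ts"
    and prod: "\<forall>x. foldr (\<circ>) (map transp_of ts) id x = (if x \<in> M then f x else x)"
    using translation_pieces_decompose[OF involution] unfolding transp_decomposition_def by blast
  then have "\<forall>i<length ts. \<forall>j<length ts. i \<noteq> j \<longrightarrow>
               disjnt (transp_support (ts ! i)) (transp_support (ts ! j))"
    by (intro sorted_wrt_sym_imp_nth) (auto simp: disjnt_sym)
  moreover have "f = foldr (\<circ>) (map transp_of ts) id"
    using prod assms(2) unfolding in_Rec_def by auto
  ultimately show ?thesis using data by blast
qed

end
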